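(* Consider two GP-ASSMs (as defined in the context), built from the same training data, kernel and mean function, with maximum memory lengths $\overline m,\overline m'\in\mathbb{N}$, $\overline m'>\overline m$, evaluated along the same states and inputs $\bm\xi_{0:t}$, so that $\bm x_{t+1}^m\sim\mathcal N(\bm f_t(\bm\xi_t,\Xi^m_t),F_t(\bm\xi_t,\Xi^m_t))$ and $\bm x_{t+1}^{m'}\sim\mathcal N(\bm f_t(\bm\xi_t,\Xi^{m'}_t),F_t(\bm\xi_t,\Xi^{m'}_t))$. Then $$\operatorname{tr}\big(F_t(\bm\xi_t,\Xi^{m'}_t)\big)\le\operatorname{tr}\big(F_t(\bm\xi_t,\Xi^{m}_t)\big)$$ holds for all $t\in\mathbb{N}$.
   Context: Training set $\mathcal D=\{X,Y\}$ with input matrix $X\in\mathbb{R}^{n_\xi\times n_{\mathcal D}}$ and output matrix $Y\in\mathbb{R}^{n_{\mathcal D}\times n_x}$, outputs corrupted by Gaussian noise $\mathcal N(0,\sigma_n^2 I)$. A kernel $k:\mathbb{R}^{n_\xi}\times\mathbb{R}^{n_\xi}\to\mathbb{R}$ (symmetric, positive semidefinite) and a continuous mean function $m:\mathbb{R}^{n_\xi}\to\mathbb{R}$ are used for every output dimension. For matrices $A=[a_1,\dots,a_p]$, $B=[b_1,\dots,b_q]$ with columns in $\mathbb{R}^{n_\xi}$, $K(A,B)$ is the $p\times q$ matrix with entries $k(a_i,b_j)$, $\bm k(z,A)=(k(z,a_1),\dots,k(z,a_p))^\top$, $\bm m(A)=(m(a_1),\dots,m(a_p))^\top$, and $K:=K(X,X)$.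 GP-ASSM with maximum memory length $\overline m\in\mathbb{N}$: states $\bm x_t\in\mathbb{R}^{n_x}$, inputs $\bm u_t\in\mathbb{R}^{n_u}$, $\bm\xi_t=[\bm x_t;\bm u_t]\in\mathbb{R}^{n_\xi}$, $n_\xi=n_x+n_u$. For $t\in\mathbb{N}$ let $\underline m=\min(t,\overline m)$, memory $\Xi^m_t=[\bm\xi_{t-1},\dots,\bm\xi_{t-\underline m}]$ (empty if $\underline m=0$), $X^m_t=[X,\bm\xi_{t-\underline m},\dots,\bm\xi_{t-1}]$, $Y^m_t=[Y^\top,\bm x_{t-\underline m+1},\dots,\bm x_t]^\top$, and with $\Xi=[\bm\xi_{t-\underline m},\dots,\bm\xi_{t-1}]$, $K^m_t=\begin{bmatrix}K+\sigma_n^2I & K(X,\Xi)\\ K(\Xi,X)&K(\Xi,\Xi)\end{bmatrix}$ (and $K^m_t=K+\sigma_n^2 I$ if $\underline m=0$). Define $\bm f_t(\bm\xi_t,\Xi^m_t)\in\mathbb{R}^{n_x}$ with $i$-th component $m(\bm\xi_t)+\bm k(\bm\xi_t,X^m_t)^\top(K^m_t)^{-1}\big((Y^m_t)_{:,i}-\bm m(X^m_t)\big)$ and the diagonal matrix $F_t(\bm\xi_t,\Xi^m_t)$ with all diagonal entries $k(\bm\xi_t,\bm\xi_t)-\bm k(\bm\xi_t,X^m_t)^\top(K^m_t)^{-1}\bm k(\bm\xi_t,X^m_t)$ (inverses are Moore–Penrose pseudoinverses if singular). The GP-ASSM generates $\bm x^m_{t+1}\mid\bm\xi_{0:t}\sim\mathcal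 N(\bm f_t(\bm\xi_t,\Xi^m_t),F_t(\bm\xi_t,\Xi^m_t))$; quantities with superscript $m'$ are defined in the same way with $\overline m'$ in place of $\overline m$. *)

theory Defs
  imports "Jordan_Normal_Form.Matrix"
begin

definition mat_trace :: "real mat \<Rightarrow> real" where
  "mat_trace A = (\<Sum>i<dim_row A. A $$ (i, i))"

definition is_mp_pinv :: "real mat \<Rightarrow> real mat \<Rightarrow> bool" where
  "is_mp_pinv A B \<longleftrightarrow> B \<in> carrier_mat (dim_col A) (dim_row A) \<and>
     A * B * A = A \<and> B * A * B = B \<and>
     transpose_mat (A * B) = A * B \<and> transpose_mat (B * A) = B * A"

definition mp_pinv :: "real mat \<Rightarrow> real mat" where
  "mp_pinv A = (SOME B. is_mp_pinv A B)"

definition psd_kernel :: "nat \<Rightarrow> (real vec \<Rightarrow> real vec \<Rightarrow> real) \<Rightarrow> bool" where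
  "psd_kernel n k \<longleftrightarrow>
     (\<forall>a b. a \<in> carrier_vec n \<longrightarrow> b \<in> carrier_vec n \<longrightarrow> k a b = k b a) \<and>
     (\<forall>as c. set as \<subseteq> carrier_vec n \<longrightarrow>
        (\<Sum>i<length as. \<Sum>j<length as. c i * c j * k (as ! i) (as ! j)) \<ge> 0)"

definition cont_mean :: "nat \<Rightarrow> (real vec \<Rightarrow> real) \<Rightarrow> bool" where
  "cont_mean n m \<longleftrightarrow> (\<forall>v \<in> carrier_vec n. \<forall>\<epsilon>>0. \<exists>\<delta>>0. \<forall>w \<in> carrier_vec n.
     sqrt (\<Sum>i<n. (w $ i - v $ i)\<^sup>2) < \<delta> \<longrightarrow> \<bar>m w - m v\<bar> < \<epsilon>)"

definition kmat :: "(real vec \<Rightarrow> real vec \<Rightarrow> real) \<Rightarrow> real vec list \<Rightarrow> real vec list \<Rightarrow> real mat" where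
  "kmat k as bs = mat (length as) (length bs) (\<lambda>(i, j). k (as ! i) (bs ! j))"

definition kvec :: "(real vec \<Rightarrow> real vec \<Rightarrow> real) \<Rightarrow> real vec \<Rightarrow> real vec list \<Rightarrow> real vec" where
  "kvec k z as = vec (length as) (\<lambda>i. k z (as ! i))"

definition mvec :: "(real vec \<Rightarrow> real) \<Rightarrow> real vec list \<Rightarrow> real vec" where
  "mvec m as = vec (length as) (\<lambda>i. m (as ! i))"

definition mem_pts :: "nat \<Rightarrow> (nat \<Rightarrow> real vec) \<Rightarrow> nat \<Rightarrow> real vec list" where
  "mem_pts mbar \<xi> t = map \<xi> [t - min t mbar ..< t]"

definition Xm :: "real mat \<Rightarrow> nat \<Rightarrow> (nat \<Rightarrow> real vec) \<Rightarrow> nat \<Rightarrow> real vec list" where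
  "Xm X mbar \<xi> t = cols X @ mem_pts mbar \<xi> t"

definition Ym :: "real mat \<Rightarrow> nat \<Rightarrow> (nat \<Rightarrow> real vec) \<Rightarrow> nat \<Rightarrow> real mat" where
  "Ym Y mbar x t = (let ms = map x [t - min t mbar + 1 ..< t + 1] in
     mat (dim_row Y + length ms) (dim_col Y)
       (\<lambda>(i, j). if i < dim_row Y then Y $$ (i, j) else (ms ! (i - dim_row Y)) $ j))"

definition Km :: "(real vec \<Rightarrow> real vec \<Rightarrow> real) \<Rightarrow> real \<Rightarrow> real mat \<Rightarrow> nat \<Rightarrow>
    (nat \<Rightarrow> real vec) \<Rightarrow> nat \<Rightarrow> real mat" where
  "Km k \<sigma>n X mbar \<xi> t = (let ps = Xm X mbar \<xi> t in
     mat (length ps) (length ps)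
       (\<lambda>(i, j). k (ps ! i) (ps ! j) + (if i = j \<and> i < dim_col X then \<sigma>n\<^sup>2 else 0)))"

definition GP_f :: "(real vec \<Rightarrow> real vec \<Rightarrow> real) \<Rightarrow> (real vec \<Rightarrow> real) \<Rightarrow> real \<Rightarrow>
    real mat \<Rightarrow> real mat \<Rightarrow> nat \<Rightarrow> (nat \<Rightarrow> real vec) \<Rightarrow> (nat \<Rightarrow> real vec) \<Rightarrow> nat \<Rightarrow> real vec" where
  "GP_f k m \<sigma>n X Y mbar x \<xi> t = (let ps = Xm X mbar \<xi> t; Yt = Ym Y mbar x t in
     vec (dim_col Y) (\<lambda>i. m (\<xi> t) +
       kvec k (\<xi> t) ps \<bullet> (mp_pinv (Km k \<sigma>n X mbar \<xi> t) *\<^sub>v (col Yt i - mvec m ps))))"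

definition GP_var :: "(real vec \<Rightarrow> real vec \<Rightarrow> real) \<Rightarrow> real \<Rightarrow> real mat \<Rightarrow> nat \<Rightarrow>
    (nat \<Rightarrow> real vec) \<Rightarrow> nat \<Rightarrow> real" where
  "GP_var k \<sigma>n X mbar \<xi> t = (let ps = Xm X mbar \<xi> t; kv = kvec k (\<xi> t) ps in
     k (\<xi> t) (\<xi> t) - kv \<bullet> (mp_pinv (Km k \<sigma>n X mbar \<xi> t) *\<^sub>v kv))"

definition GP_F :: "(real vec \<Rightarrow> real vec \<Rightarrow> real) \<Rightarrow> real \<Rightarrow> real mat \<Rightarrow> nat \<Rightarrow> nat \<Rightarrow>
    (nat \<Rightarrow> real vec) \<Rightarrow> nat \<Rightarrow> real mat" where
  "GP_F k \<sigma>n X nx mbar \<xi> t =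
     mat nx nx (\<lambda>(i, j). if i = j then GP_var k \<sigma>n X mbar \<xi> t else 0)"

end

theory Submission
  imports Defs "Jordan_Normal_Form.Gauss_Jordan_Elimination"
begin

text \<open>The posterior variance at \<open>z\<close> is the least mean squared error of a linear predictor
  \<open>\<Sum>i. c\<^sub>i y\<^sub>i\<close> of \<open>f z\<close> from the observations at the points of \<open>X\<^sup>m\<^sub>t\<close>.  This error is the quadratic form
  \<open>k(z,z) - 2 c\<^sup>T k(z,X\<^sup>m\<^sub>t) + c\<^sup>T K\<^sup>m\<^sub>t c\<close>; positive semidefiniteness of the kernel on \<open>z\<close> and the
  data points puts \<open>k(z,X\<^sup>m\<^sub>t)\<close> in the range of \<open>K\<^sup>m\<^sub>t\<close>, so the minimum is the Schur complement
  \<open>k(z,z) - k\<^sup>T (K\<^sup>m\<^sub>t)\<^sup>+ k\<close>, attained at the kriging weights \<open>c = (K\<^sup>m\<^sub>t)\<^sup>+ k\<close>.  A longer memory only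
  inserts older states between the training inputs and the shorter memory, and padding the
  optimal weights for the shorter memory with zeros does not change the error, so the minimum
  can only decrease.  The trace of \<open>F\<^sub>t\<close> is \<open>n\<^sub>x\<close> times the posterior variance.\<close>

section \<open>Generalized inverses and the Moore--Penrose inverse of a symmetric matrix\<close>

declare assoc_mult_mat[simp del]

lemma assoc_mult_mat_dims:
  fixes A B C :: "'a :: semiring_0 mat"
  assumes "dim_col A = dim_row B" "dim_col B = dim_row C"
  shows "A * B * C = A * (B * C)"
  using assms by (intro assoc_mult_mat[of _ "dim_row A" "dim_col A" _ "dim_col B" _ "dim_col C"]) auto

lemma pivot_fun_generalized_inverse:
  fixes R :: "'a :: field mat"
  assumes R: "R \<in> carrier_mat n n" and pf: "pivot_fun R f n"
  defines "E \<equiv> mat n n (\<lambda>(j, i). if f i < n \<and> j = f i then 1 else 0)"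
  shows "R * E * R = R"
proof -
  have dr: "dim_row R = n" using R by auto
  have RE: "R * E = mat n n (\<lambda>(i', i). if i' = i \<and> f i < n then 1 else 0)"
  proof (rule eq_matI)
    fix i' i assume i': "i' < dim_row (mat n n (\<lambda>(i', i). if i' = i \<and> f i < n then 1 else (0::'a)))"
      and i: "i < dim_col (mat n n (\<lambda>(i', i). if i' = i \<and> f i < n then 1 else (0::'a)))"
    have "(R * E) $$ (i', i) = (\<Sum>j<n. R $$ (i', j) * E $$ (j, i))"
      using i i' R unfolding E_def by (auto simp: scalar_prod_def lessThan_atLeast0)
    also have "\<dots> = (if f i < n then R $$ (i', f i) else 0)"
      using i i' unfolding E_def by (auto simp: if_distrib cong: if_cong)
    also have "\<dots> = (if i' = i \<and> f i < n then 1 else 0)"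
      using pivot_funD[OF dr pf] i i' by auto
    finally show "(R * E) $$ (i', i) = mat n n (\<lambda>(i', i). if i' = i \<and> f i < n then 1 else (0::'a)) $$ (i', i)"
      using i i' by auto
  qed (use R E_def in auto)
  show ?thesis
  proof (rule eq_matI)
    fix i' j assume i': "i' < dim_row R" and j: "j < dim_col R"
    have "(R * E * R) $$ (i', j) = (\<Sum>i<n. (if i' = i \<and> f i < n then 1 else 0) * R $$ (i, j))"
      using i' j R unfolding RE by (auto simp: scalar_prod_def lessThan_atLeast0)
    also have "\<dots> = (\<Sum>i<n. if i = i' then (if f i' < n then R $$ (i', j) else 0) else 0)"
      by (rule sum.cong) auto
    also have "\<dots> = (if f i' < n then R $$ (i', j) else 0)"
      using i' R by simp
    also have "\<dots> = R $$ (i', j)"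
      using pivot_funD[OF dr pf] i' j R by (cases "f i' < n") auto
    finally show "(R * E * R) $$ (i', j) = R $$ (i', j)" .
  qed (use R E_def RE in auto)
qed

lemma generalized_inverse_exists:
  fixes A :: "'a :: field mat"
  assumes A: "A \<in> carrier_mat n n"
  shows "\<exists>G \<in> carrier_mat n n. A * G * A = A"
proof -
  define R where "R = gauss_jordan_single A"
  note gj = gauss_jordan_single[OF A R_def[symmetric]]
  obtain f where pf: "pivot_fun R f n" using gj(2,3) unfolding row_echelon_form_def by auto
  obtain P Q where PQ: "R = P * A" "P \<in> carrier_mat n n" "Q \<in> carrier_mat n n" "Q * P = 1\<^sub>m n"
    using gj(4) by auto
  define E where "E = mat n n (\<lambda>(j, i). if f i < n \<and> j = f i then 1 else (0::'a))"
  have E: "E \<in> carrier_mat n n" unfolding E_def by auto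
  have RER: "R * E * R = R" using pivot_fun_generalized_inverse[OF gj(2) pf] unfolding E_def .
  have A_QR: "A = Q * R"
  proof -
    have "Q * R = (Q * P) * A" using assoc_mult_mat[OF PQ(3) PQ(2) A] PQ(1) by simp
    also have "\<dots> = A" using PQ(4) A by simp
    finally show ?thesis ..
  qed
  have "A * (E * P) * A = Q * (R * E * R)"
  proof -
    have "A * (E * P) * A = Q * R * (E * P) * A" using A_QR by simp
    also have "\<dots> = Q * (R * E * (P * A))"
      using PQ(2,3) A E gj(2) by (simp add: assoc_mult_mat_dims)
    finally show ?thesis using PQ by simp
  qed
  also have "\<dots> = A" using RER A_QR by simp
  finally show ?thesis using E PQ by (intro bexI[of _ "E * P"]) auto
qed

lemma mult_transpose_self_eq_zero:
  fixes M :: "real mat"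
  assumes M: "M \<in> carrier_mat n m" and z: "M * transpose_mat M = 0\<^sub>m n n"
  shows "M = 0\<^sub>m n m"
proof (rule eq_matI)
  fix i j assume i: "i < dim_row (0\<^sub>m n m :: real mat)" and j: "j < dim_col (0\<^sub>m n m :: real mat)"
  have "(\<Sum>l<m. (M $$ (i, l))\<^sup>2) = (M * transpose_mat M) $$ (i, i)"
    using i M by (auto simp: scalar_prod_def lessThan_atLeast0 power2_eq_square)
  also have "\<dots> = 0" using z i by simp
  finally have "\<forall>l<m. (M $$ (i, l))\<^sup>2 = 0" by (simp add: sum_nonneg_eq_0_iff)
  then show "M $$ (i, j) = 0\<^sub>m n m $$ (i, j)" using i j by auto
qed (use M in auto)

lemma mat_eq_if_minus_eq_zero:
  fixes A B :: "'a :: ab_group_add mat"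
  assumes "A \<in> carrier_mat nr nc" "B \<in> carrier_mat nr nc" "A - B = 0\<^sub>m nr nc"
  shows "A = B"
proof (rule eq_matI)
  fix i j assume ij: "i < dim_row B" "j < dim_col B"
  have "A $$ (i, j) - B $$ (i, j) = (A - B) $$ (i, j)" using ij by simp
  also have "\<dots> = 0" using assms ij by simp
  finally show "A $$ (i, j) = B $$ (i, j)" by simp
qed (use assms in auto)

lemma vec_eq_if_minus_eq_zero:
  fixes u v :: "'a :: ab_group_add vec"
  assumes "u \<in> carrier_vec n" "v \<in> carrier_vec n" "u - v = 0\<^sub>v n"
  shows "u = v"
proof (rule eq_vecI)
  fix i assume i: "i < dim_vec v"
  have "u $ i - v $ i = (u - v) $ i" using i by simp
  also have "\<dots> = 0" using assms i by simp
  finally show "u $ i = v $ i" by simp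
qed (use assms in auto)

lemma scalar_prod_self_eq_zero:
  fixes r :: "real vec"
  assumes "r \<in> carrier_vec n" "r \<bullet> r = 0"
  shows "r = 0\<^sub>v n"
  using conjugate_square_eq_0_vec[OF assms(1)] assms by (simp add: conjugate_vec_def)

lemma symmetric_mult_cancel_right:
  fixes C X Y :: "real mat"
  assumes C: "C \<in> carrier_mat n n" and sym: "transpose_mat C = C"
    and eq: "X * C * C = Y * C * C"
    and X: "X \<in> carrier_mat k n" and Y: "Y \<in> carrier_mat k n"
  shows "X * C = Y * C"
proof -
  define D where "D = X - Y"
  have D: "D \<in> carrier_mat k n" using X Y D_def by auto
  have XC: "X * C \<in> carrier_mat k n" and YC: "Y * C \<in> carrier_mat k n" using X Y C by auto
  have DC: "D * C = X * C - Y * C" unfolding D_def by (rule minus_mult_distrib_mat[OF X Y C])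
  have "D * C * C = X * C * C - Y * C * C"
    unfolding DC by (rule minus_mult_distrib_mat[OF XC YC C])
  also have "\<dots> = 0\<^sub>m k n" unfolding eq by (rule minus_r_inv_mat[OF mult_carrier_mat[OF YC C]])
  finally have DCC: "D * C * C = 0\<^sub>m k n" .
  have "(D * C) * transpose_mat (D * C) = (D * C * C) * transpose_mat D"
    unfolding transpose_mult[OF D C] sym using D C by (simp add: assoc_mult_mat_dims)
  also have "\<dots> = 0\<^sub>m k k" unfolding DCC using D by simp
  finally have "D * C = 0\<^sub>m k n" by (rule mult_transpose_self_eq_zero[OF mult_carrier_mat[OF D C]])
  then have "X * C - Y * C = 0\<^sub>m k n" using DC by simp
  then show ?thesis by (rule mat_eq_if_minus_eq_zero[OF XC YC])
qed

lemma symmetric_mult_cancel_left: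
  fixes C X Y :: "real mat"
  assumes C: "C \<in> carrier_mat n n" and sym: "transpose_mat C = C"
    and eq: "C * C * X = C * C * Y"
    and X: "X \<in> carrier_mat n k" and Y: "Y \<in> carrier_mat n k"
  shows "C * X = C * Y"
proof -
  have transpose_CCZ: "transpose_mat (C * C * Z) = transpose_mat Z * C * C" if Z: "Z \<in> carrier_mat n k" for Z
  proof -
    have "transpose_mat (C * C * Z) = transpose_mat Z * transpose_mat (C * C)"
      using C Z by (intro transpose_mult) auto
    also have "\<dots> = transpose_mat Z * C * C"
      using C Z sym by (simp add: transpose_mult[OF C C] assoc_mult_mat_dims)
    finally show ?thesis .
  qed
  have "transpose_mat X * C * C = transpose_mat Y * C * C"
    using eq transpose_CCZ[OF X] transpose_CCZ[OF Y] by metis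
  then have "transpose_mat X * C = transpose_mat Y * C"
    by (rule symmetric_mult_cancel_right[OF C sym]) (use X Y in auto)
  then have "transpose_mat (transpose_mat (C * X)) = transpose_mat (transpose_mat (C * Y))"
    using C X Y sym by (simp add: transpose_mult)
  then show ?thesis by simp
qed

lemma right_unit_of_symmetric_is_symmetric:
  fixes C P H :: "real mat"
  assumes C: "C \<in> carrier_mat n n" and sym: "transpose_mat C = C"
    and H: "H \<in> carrier_mat n n" and P: "P = C * H" and CP: "C * P = C"
  shows "transpose_mat P = P"
proof -
  have P_carrier: "P \<in> carrier_mat n n" using C H P by simp
  have "transpose_mat P * C = C"
    using arg_cong[OF CP, of transpose_mat] transpose_mult[OF C P_carrier] sym by simp
  then have "transpose_mat P * P = P"
    using C H P_carrier by (simp add: P assoc_mult_mat_dims[symmetric])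
  moreover have "transpose_mat (transpose_mat P * P) = transpose_mat P * P"
    using P_carrier by (simp add: transpose_mult[of _ n n])
  ultimately show ?thesis by simp
qed

lemma left_unit_of_symmetric_is_symmetric:
  fixes C Q H :: "real mat"
  assumes C: "C \<in> carrier_mat n n" and sym: "transpose_mat C = C"
    and H: "H \<in> carrier_mat n n" and Q: "Q = H * C" and QC: "Q * C = C"
  shows "transpose_mat Q = Q"
proof -
  have Q_carrier: "Q \<in> carrier_mat n n" using C H Q by simp
  have "C * transpose_mat Q = C"
    using arg_cong[OF QC, of transpose_mat] transpose_mult[OF Q_carrier C] sym by simp
  then have "Q * transpose_mat Q = Q"
    using C H Q_carrier by (simp add: Q assoc_mult_mat_dims)
  moreover have "transpose_mat (Q * transpose_mat Q) = Q * transpose_mat Q"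
    using Q_carrier by (simp add: transpose_mult[of _ n n])
  ultimately show ?thesis by simp
qed

lemma symmetric_cube_generalized_inverse:
  fixes C G :: "real mat"
  assumes C: "C \<in> carrier_mat n n" and sym: "transpose_mat C = C" and G: "G \<in> carrier_mat n n"
    and gen_inv: "C * C * C * G * (C * C * C) = C * C * C"
  shows "C * (C * (C * (G * C))) = C" and "C * (C * (G * (C * C))) = C"
    and "C * (G * (C * (C * C))) = C"
proof -
  have d[simp]: "dim_row C = n" "dim_col C = n" "dim_row G = n" "dim_col G = n"
    using C G by auto
  have one: "1\<^sub>m n * C = C" "C * 1\<^sub>m n = C" using C by auto
  have S: "C * (C * (C * (G * (C * C)))) = C * C"
  proof -
    have "(C * C * C * G * C) * C * C = C * C * C"
      using gen_inv by (simp add: assoc_mult_mat_dims)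
    then have "(C * C * C * G * C) * C = C * C"
      by (rule symmetric_mult_cancel_right[OF C sym, where k = n]) (simp_all add: carrier_matI)
    then show ?thesis by (simp add: assoc_mult_mat_dims)
  qed
  have "(C * C * C * G) * C * C = 1\<^sub>m n * C * C"
    using S one by (simp add: assoc_mult_mat_dims)
  then have "(C * C * C * G) * C = 1\<^sub>m n * C"
    by (rule symmetric_mult_cancel_right[OF C sym, where k = n]) (simp_all add: carrier_matI)
  then show "C * (C * (C * (G * C))) = C" using one by (simp add: assoc_mult_mat_dims)
  have "C * C * (C * G * C * C) = C * C * 1\<^sub>m n"
    using S one by (simp add: assoc_mult_mat_dims)
  then have "C * (C * G * C * C) = C * 1\<^sub>m n"
    by (rule symmetric_mult_cancel_left[OF C sym, where k = n]) (simp_all add: carrier_matI)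
  then show "C * (C * (G * (C * C))) = C" using one by (simp add: assoc_mult_mat_dims)
  have "C * C * (C * G * C * C * C) = C * C * C"
    using gen_inv by (simp add: assoc_mult_mat_dims)
  then have "C * (C * G * C * C * C) = C * C"
    by (rule symmetric_mult_cancel_left[OF C sym, where k = n]) (simp_all add: carrier_matI)
  then have "C * C * (G * C * C * C) = C * C * 1\<^sub>m n"
    using one by (simp add: assoc_mult_mat_dims)
  then have "C * (G * C * C * C) = C * 1\<^sub>m n"
    by (rule symmetric_mult_cancel_left[OF C sym, where k = n]) (simp_all add: carrier_matI)
  then show "C * (G * (C * (C * C))) = C" using one by (simp add: assoc_mult_mat_dims)
qed

text \<open>Since \<^const>\<open>mp_pinv\<close> is defined by choice, its defining equations are only available
  once a pseudoinverse is known to exist.  For symmetric \<open>C\<close>, \<open>C G C\<close> is one whenever \<open>G\<close>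
  is a generalized inverse of \<open>C\<^sup>3\<close>.\<close>

lemma is_mp_pinv_mp_pinv:
  fixes C :: "real mat"
  assumes C: "C \<in> carrier_mat n n" and sym: "transpose_mat C = C"
  shows "is_mp_pinv C (mp_pinv C)"
proof -
  obtain G where G: "G \<in> carrier_mat n n" and gen_inv: "C * C * C * G * (C * C * C) = C * C * C"
    using generalized_inverse_exists[of "C * C * C" n] C by (meson mult_carrier_mat)
  note E = symmetric_cube_generalized_inverse[OF C sym G gen_inv]
  have d[simp]: "dim_row C = n" "dim_col C = n" "dim_row G = n" "dim_col G = n"
    using C G by auto
  define B where "B = C * (G * C)"
  have B: "B \<in> carrier_mat n n" unfolding B_def using C G by simp
  have "C * B * C = C" using E(2) by (simp add: B_def assoc_mult_mat_dims)
  moreover have "B * C * B = B" using E(1) by (simp add: B_def assoc_mult_mat_dims)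
  moreover have "transpose_mat (C * B) = C * B"
    using E(1) by (intro right_unit_of_symmetric_is_symmetric[OF C sym B refl])
      (simp add: B_def assoc_mult_mat_dims)
  moreover have "transpose_mat (B * C) = B * C"
    using E(3) by (intro left_unit_of_symmetric_is_symmetric[OF C sym B refl])
      (simp add: B_def assoc_mult_mat_dims)
  ultimately have "is_mp_pinv C B" unfolding is_mp_pinv_def using B by simp
  then show ?thesis unfolding mp_pinv_def by (rule someI)
qed

section \<open>Minimizing a quadratic form\<close>

lemma quadratic_nonneg_linear_coeff_zero:
  fixes a \<beta> :: real
  assumes nonneg: "\<And>s. 0 \<le> s\<^sup>2 * a + 2 * s * \<beta>"
  shows "\<beta> = 0"
proof (rule ccontr)
  assume "\<beta> \<noteq> 0"
  define t where "t = 1 / (\<bar>a\<bar> + 1)"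
  have "t > 0" "t * a < 2"
    unfolding t_def by (auto simp: field_simps abs_if split: if_splits)
  have "(- \<beta> * t)\<^sup>2 * a + 2 * (- \<beta> * t) * \<beta> = (\<beta>\<^sup>2 * t) * (t * a - 2)"
    by (simp add: power2_eq_square algebra_simps)
  also have "\<dots> < 0"
    using \<open>t > 0\<close> \<open>t * a < 2\<close> \<open>\<beta> \<noteq> 0\<close> by (intro mult_pos_neg) auto
  finally show False using nonneg[of "- \<beta> * t"] by linarith
qed

text \<open>The residual \<open>r = b - C B b\<close> lies in the kernel of \<open>C\<close>; positivity of the block matrix
  makes \<open>b\<close> orthogonal to that kernel, and \<open>r\<close> is orthogonal to the range of \<open>C\<close>, so \<open>r \<bullet> r = 0\<close>.\<close>

lemma pinv_solves_if_psd_block: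
  fixes C B :: "real mat" and b :: "real vec" and a :: real
  assumes C: "C \<in> carrier_mat n n" and sym: "transpose_mat C = C" and b: "b \<in> carrier_vec n"
    and mp: "is_mp_pinv C B"
    and psd: "\<And>s w. w \<in> carrier_vec n \<Longrightarrow> 0 \<le> s\<^sup>2 * a + 2 * s * (b \<bullet> w) + w \<bullet> (C *\<^sub>v w)"
  shows "C *\<^sub>v (B *\<^sub>v b) = b"
proof -
  have B: "B \<in> carrier_mat n n" and CBC: "C * B * C = C" and CB_sym: "transpose_mat (C * B) = C * B"
    using mp C unfolding is_mp_pinv_def by auto
  have CCB: "C * (C * B) = C"
    using arg_cong[OF CBC, of transpose_mat] transpose_mult[OF mult_carrier_mat[OF C B] C] CB_sym sym
    by simp
  define v where "v = B *\<^sub>v b"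
  define r where "r = b - C *\<^sub>v v"
  have v: "v \<in> carrier_vec n" and Cv: "C *\<^sub>v v \<in> carrier_vec n" and r: "r \<in> carrier_vec n"
    unfolding r_def v_def using B C b by auto
  have "C *\<^sub>v r = C *\<^sub>v b - C *\<^sub>v (C *\<^sub>v v)"
    unfolding r_def by (rule mult_minus_distrib_mat_vec[OF C b Cv])
  also have "C *\<^sub>v (C *\<^sub>v v) = (C * (C * B)) *\<^sub>v b"
    unfolding v_def assoc_mult_mat_vec[OF C mult_carrier_mat[OF C B] b] assoc_mult_mat_vec[OF C B b] ..
  finally have Cr: "C *\<^sub>v r = 0\<^sub>v n" unfolding CCB using C b by simp
  have "b \<bullet> r = 0"
    by (rule quadratic_nonneg_linear_coeff_zero[of a]) (use psd[OF r] Cr r in simp)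
  moreover have "r \<bullet> (C *\<^sub>v v) = 0"
    using transpose_vec_mult_scalar[OF C v r] Cr sym v by simp
  ultimately have "r \<bullet> r = 0"
    using scalar_prod_minus_distrib[OF r b Cv] comm_scalar_prod[OF r b] by (simp add: r_def[symmetric])
  then have "r = 0\<^sub>v n" by (rule scalar_prod_self_eq_zero[OF r])
  then show ?thesis unfolding v_def[symmetric] r_def by (rule vec_eq_if_minus_eq_zero[OF b Cv, symmetric])
qed

lemma quadratic_minimum_at_solution:
  fixes C :: "real mat" and b v w :: "real vec"
  assumes C: "C \<in> carrier_mat n n" and sym: "transpose_mat C = C"
    and psd: "\<And>u. u \<in> carrier_vec n \<Longrightarrow> 0 \<le> u \<bullet> (C *\<^sub>v u)"
    and v: "v \<in> carrier_vec n" and Cv: "C *\<^sub>v v = b" and w: "w \<in> carrier_vec n"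
  shows "- (b \<bullet> v) \<le> w \<bullet> (C *\<^sub>v w) - 2 * (b \<bullet> w)"
proof -
  define u where "u = w - v"
  have u: "u \<in> carrier_vec n" and b: "b \<in> carrier_vec n" and Cw: "C *\<^sub>v w \<in> carrier_vec n"
    unfolding u_def using w v C Cv[symmetric] by auto
  have vCw: "v \<bullet> (C *\<^sub>v w) = b \<bullet> w"
    using transpose_vec_mult_scalar[OF C w v] sym Cv by simp
  have "0 \<le> u \<bullet> (C *\<^sub>v u)" by (rule psd[OF u])
  also have "C *\<^sub>v u = C *\<^sub>v w - b"
    unfolding u_def Cv[symmetric] by (rule mult_minus_distrib_mat_vec[OF C w v])
  also have "u \<bullet> (C *\<^sub>v w - b) = u \<bullet> (C *\<^sub>v w) - u \<bullet> b"
    by (rule scalar_prod_minus_distrib[OF u Cw b])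
  also have "\<dots> = w \<bullet> (C *\<^sub>v w) - 2 * (b \<bullet> w) + b \<bullet> v"
    unfolding u_def minus_scalar_prod_distrib[OF w v Cw] minus_scalar_prod_distrib[OF w v b] vCw
    using comm_scalar_prod[OF w b] comm_scalar_prod[OF v b] by simp
  finally show ?thesis by simp
qed

lemma sum_reindex_vanishing:
  fixes f :: "nat \<Rightarrow> 'a :: comm_monoid_add"
  assumes inj: "inj_on e {..<N}" and img: "e ` {..<N} \<subseteq> {..<N'}"
    and vanish: "\<And>j. j < N' \<Longrightarrow> j \<notin> e ` {..<N} \<Longrightarrow> f j = 0"
  shows "(\<Sum>j<N'. f j) = (\<Sum>i<N. f (e i))"
proof -
  have "(\<Sum>j<N'. f j) = (\<Sum>j\<in>e ` {..<N}. f j)"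
    by (rule sum.mono_neutral_right) (use img vanish in auto)
  also have "\<dots> = (\<Sum>i<N. f (e i))" by (rule sum.reindex_cong[OF inj refl refl])
  finally show ?thesis .
qed

section \<open>The posterior variance as a least prediction error\<close>

definition noisy_gram :: "(real vec \<Rightarrow> real vec \<Rightarrow> real) \<Rightarrow> real \<Rightarrow> nat \<Rightarrow> real vec list \<Rightarrow> real mat" where
  "noisy_gram k \<sigma> nD ps = mat (length ps) (length ps)
     (\<lambda>(i, j). k (ps ! i) (ps ! j) + (if i = j \<and> i < nD then \<sigma>\<^sup>2 else 0))"

definition post_var :: "(real vec \<Rightarrow> real vec \<Rightarrow> real) \<Rightarrow> real \<Rightarrow> nat \<Rightarrow> real vec \<Rightarrow> real vec list \<Rightarrow> real" where
  "post_var k \<sigma> nD z ps = k z z - kvec k z ps \<bullet> (mp_pinv (noisy_gram k \<sigma> nD ps) *\<^sub>v kvec k z ps)"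

text \<open>\<open>linear_predictor_mse k \<sigma> nD z ps c\<close> is \<open>E (f z - \<Sum>i. c\<^sub>i y\<^sub>i)\<^sup>2\<close> for a centred process \<open>f\<close> with
  covariance \<open>k\<close> observed as \<open>y\<^sub>i = f (ps ! i) + \<epsilon>\<^sub>i\<close>, where the noise \<open>\<epsilon>\<^sub>i\<close> has variance \<open>\<sigma>\<^sup>2\<close> for the
  first \<open>nD\<close> (training) points and vanishes for the remaining (memory) points.\<close>

definition linear_predictor_mse ::
    "(real vec \<Rightarrow> real vec \<Rightarrow> real) \<Rightarrow> real \<Rightarrow> nat \<Rightarrow> real vec \<Rightarrow> real vec list \<Rightarrow> (nat \<Rightarrow> real) \<Rightarrow> real" where
  "linear_predictor_mse k \<sigma> nD z ps c =
     k z z - 2 * (\<Sum>i<length ps. c i * k z (ps ! i))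
     + (\<Sum>i<length ps. \<Sum>j<length ps. c i * c j * k (ps ! i) (ps ! j))
     + \<sigma>\<^sup>2 * (\<Sum>i<length ps. if i < nD then (c i)\<^sup>2 else 0)"

lemma GP_var_eq_post_var: "GP_var k \<sigma>n X mb \<xi> t = post_var k \<sigma>n (dim_col X) (\<xi> t) (Xm X mb \<xi> t)"
  unfolding GP_var_def Km_def post_var_def noisy_gram_def Let_def ..

lemma kvec_scalar_prod:
  assumes "w \<in> carrier_vec (length ps)"
  shows "kvec k z ps \<bullet> w = (\<Sum>i<length ps. w $ i * k z (ps ! i))"
  using assms unfolding kvec_def scalar_prod_def by (auto simp: lessThan_atLeast0 intro!: sum.cong)

lemma noisy_gram_quadratic_form:
  assumes w: "w \<in> carrier_vec (length ps)"
  shows "w \<bullet> (noisy_gram k \<sigma> nD ps *\<^sub>v w) =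
    (\<Sum>i<length ps. \<Sum>j<length ps. w $ i * w $ j * k (ps ! i) (ps ! j))
    + \<sigma>\<^sup>2 * (\<Sum>i<length ps. if i < nD then (w $ i)\<^sup>2 else 0)"
proof -
  let ?N = "length ps"
  have row: "(noisy_gram k \<sigma> nD ps *\<^sub>v w) $ i =
      (\<Sum>j<?N. w $ j * k (ps ! i) (ps ! j)) + (if i < nD then \<sigma>\<^sup>2 * w $ i else 0)"
    if i: "i < ?N" for i
  proof -
    have "(noisy_gram k \<sigma> nD ps *\<^sub>v w) $ i =
        (\<Sum>j<?N. (k (ps ! i) (ps ! j) + (if i = j \<and> i < nD then \<sigma>\<^sup>2 else 0)) * w $ j)"
      using i w by (simp add: noisy_gram_def scalar_prod_def lessThan_atLeast0)
    also have "\<dots> = (\<Sum>j<?N. w $ j * k (ps ! i) (ps ! j))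
        + (\<Sum>j<?N. if j = i then (if i < nD then \<sigma>\<^sup>2 * w $ i else 0) else 0)"
      unfolding sum.distrib[symmetric] by (rule sum.cong) (auto simp: algebra_simps)
    also have "\<dots> = (\<Sum>j<?N. w $ j * k (ps ! i) (ps ! j)) + (if i < nD then \<sigma>\<^sup>2 * w $ i else 0)"
      using i by simp
    finally show ?thesis .
  qed
  have "w \<bullet> (noisy_gram k \<sigma> nD ps *\<^sub>v w) = (\<Sum>i<?N. w $ i * (noisy_gram k \<sigma> nD ps *\<^sub>v w) $ i)"
    using w unfolding scalar_prod_def noisy_gram_def by (simp add: lessThan_atLeast0)
  also have "\<dots> = (\<Sum>i<?N. (\<Sum>j<?N. w $ i * w $ j * k (ps ! i) (ps ! j))
      + \<sigma>\<^sup>2 * (if i < nD then (w $ i)\<^sup>2 else 0))"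
    by (rule sum.cong) (auto simp: row sum_distrib_left algebra_simps power2_eq_square)
  finally show ?thesis by (simp add: sum.distrib sum_distrib_left)
qed

lemma psd_kernel_augmented:
  assumes kern: "psd_kernel d k" and ps: "set ps \<subseteq> carrier_vec d" and z: "z \<in> carrier_vec d"
  shows "0 \<le> s\<^sup>2 * k z z + 2 * s * (\<Sum>i<length ps. c i * k z (ps ! i))
     + (\<Sum>i<length ps. \<Sum>j<length ps. c i * c j * k (ps ! i) (ps ! j))"
proof -
  let ?N = "length ps"
  define c' where "c' i = (if i = 0 then s else c (i - 1))" for i
  have symk: "k (ps ! i) z = k z (ps ! i)" if "i < ?N" for i
    using kern ps z that unfolding psd_kernel_def by (meson nth_mem subsetD)
  have "set (z # ps) \<subseteq> carrier_vec d" using ps z by simp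
  then have "0 \<le> (\<Sum>i<length (z # ps). \<Sum>j<length (z # ps). c' i * c' j * k ((z # ps) ! i) ((z # ps) ! j))"
    using kern unfolding psd_kernel_def by blast
  also have "\<dots> = s * s * k z z + (\<Sum>j<?N. s * c j * k z (ps ! j))
      + (\<Sum>i<?N. c i * s * k (ps ! i) z + (\<Sum>j<?N. c i * c j * k (ps ! i) (ps ! j)))"
    by (simp only: length_Cons sum.lessThan_Suc_shift) (simp add: c'_def sum.distrib)
  also have "\<dots> = s\<^sup>2 * k z z + 2 * s * (\<Sum>i<?N. c i * k z (ps ! i))
      + (\<Sum>i<?N. \<Sum>j<?N. c i * c j * k (ps ! i) (ps ! j))"
    using symk by (simp add: sum.distrib sum_distrib_left power2_eq_square algebra_simps)
  finally show ?thesis .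
qed

lemma noisy_gram_symmetric:
  assumes kern: "psd_kernel d k" and ps: "set ps \<subseteq> carrier_vec d"
  shows "transpose_mat (noisy_gram k \<sigma> nD ps) = noisy_gram k \<sigma> nD ps"
proof -
  have "k (ps ! i) (ps ! j) = k (ps ! j) (ps ! i)" if "i < length ps" "j < length ps" for i j
    using kern ps that unfolding psd_kernel_def by (meson nth_mem subsetD)
  then show ?thesis by (intro eq_matI) (auto simp: noisy_gram_def)
qed

lemma linear_predictor_mse_vec:
  assumes w: "w \<in> carrier_vec (length ps)"
  shows "linear_predictor_mse k \<sigma> nD z ps (\<lambda>i. w $ i) =
    k z z - 2 * (kvec k z ps \<bullet> w) + w \<bullet> (noisy_gram k \<sigma> nD ps *\<^sub>v w)"
  unfolding linear_predictor_mse_def kvec_scalar_prod[OF w] noisy_gram_quadratic_form[OF w] by simp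

lemma linear_predictor_mse_cong:
  assumes "\<And>i. i < length ps \<Longrightarrow> c i = c' i"
  shows "linear_predictor_mse k \<sigma> nD z ps c = linear_predictor_mse k \<sigma> nD z ps c'"
  using assms unfolding linear_predictor_mse_def by (simp cong: if_cong)

lemma noisy_gram_psd_block:
  assumes kern: "psd_kernel d k" and ps: "set ps \<subseteq> carrier_vec d" and z: "z \<in> carrier_vec d"
    and w: "w \<in> carrier_vec (length ps)"
  shows "0 \<le> s\<^sup>2 * k z z + 2 * s * (kvec k z ps \<bullet> w) + w \<bullet> (noisy_gram k \<sigma> nD ps *\<^sub>v w)"
proof -
  have "0 \<le> \<sigma>\<^sup>2 * (\<Sum>i<length ps. if i < nD then (w $ i)\<^sup>2 else 0)"
    by (intro mult_nonneg_nonneg sum_nonneg) auto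
  then show ?thesis
    using psd_kernel_augmented[OF kern ps z, of s "\<lambda>i. w $ i"]
    unfolding kvec_scalar_prod[OF w] noisy_gram_quadratic_form[OF w] by linarith
qed

lemma post_var_linear_predictor_mse:
  assumes kern: "psd_kernel d k" and ps: "set ps \<subseteq> carrier_vec d" and z: "z \<in> carrier_vec d"
  shows "post_var k \<sigma> nD z ps \<le> linear_predictor_mse k \<sigma> nD z ps c"
    and "post_var k \<sigma> nD z ps =
      linear_predictor_mse k \<sigma> nD z ps (\<lambda>i. (mp_pinv (noisy_gram k \<sigma> nD ps) *\<^sub>v kvec k z ps) $ i)"
proof -
  let ?N = "length ps"
  define C where "C = noisy_gram k \<sigma> nD ps"
  define b where "b = kvec k z ps"
  define v where "v = mp_pinv C *\<^sub>v b"
  have C: "C \<in> carrier_mat ?N ?N" and b: "b \<in> carrier_vec ?N"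
    unfolding C_def noisy_gram_def b_def kvec_def by auto
  have sym: "transpose_mat C = C" unfolding C_def by (rule noisy_gram_symmetric[OF kern ps])
  have mp: "is_mp_pinv C (mp_pinv C)" by (rule is_mp_pinv_mp_pinv[OF C sym])
  then have v: "v \<in> carrier_vec ?N" unfolding v_def is_mp_pinv_def using b C by auto
  have psd_block: "0 \<le> s\<^sup>2 * k z z + 2 * s * (b \<bullet> w) + w \<bullet> (C *\<^sub>v w)"
    if "w \<in> carrier_vec ?N" for s w
    unfolding C_def b_def by (rule noisy_gram_psd_block[OF kern ps z that])
  have Cv: "C *\<^sub>v v = b" unfolding v_def by (rule pinv_solves_if_psd_block[OF C sym b mp psd_block])
  have post_var: "post_var k \<sigma> nD z ps = k z z - b \<bullet> v"
    unfolding post_var_def v_def b_def C_def ..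
  have "linear_predictor_mse k \<sigma> nD z ps c = linear_predictor_mse k \<sigma> nD z ps (\<lambda>i. vec ?N c $ i)"
    by (rule linear_predictor_mse_cong) simp
  also have "\<dots> = k z z + (vec ?N c \<bullet> (C *\<^sub>v vec ?N c) - 2 * (b \<bullet> vec ?N c))"
    unfolding linear_predictor_mse_vec[OF vec_carrier] C_def b_def by simp
  also have "\<dots> \<ge> k z z - b \<bullet> v"
    using quadratic_minimum_at_solution[OF C sym _ v Cv vec_carrier] psd_block[of _ 0] by simp
  finally show "post_var k \<sigma> nD z ps \<le> linear_predictor_mse k \<sigma> nD z ps c" unfolding post_var .
  have "linear_predictor_mse k \<sigma> nD z ps (\<lambda>i. v $ i) = k z z - 2 * (b \<bullet> v) + v \<bullet> b"
    unfolding linear_predictor_mse_vec[OF v] Cv C_def[symmetric] b_def[symmetric] ..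
  then show "post_var k \<sigma> nD z ps = linear_predictor_mse k \<sigma> nD z ps (\<lambda>i. (mp_pinv (noisy_gram k \<sigma> nD ps) *\<^sub>v kvec k z ps) $ i)"
    unfolding post_var v_def[symmetric] C_def[symmetric] b_def[symmetric] using comm_scalar_prod[OF v b] by simp
qed

lemma linear_predictor_mse_insert:
  assumes A: "length A = nD"
  shows "linear_predictor_mse k \<sigma> nD z (A @ E @ M)
      (\<lambda>i. if i < nD then c i else if i < nD + length E then 0 else c (i - length E))
    = linear_predictor_mse k \<sigma> nD z (A @ M) c"
    (is "linear_predictor_mse k \<sigma> nD z ?ps' ?c' = linear_predictor_mse k \<sigma> nD z ?ps c")
proof -
  define e where "e i = (if i < nD then i else i + length E)" for i
  let ?N = "length ?ps" and ?N' = "length ?ps'"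
  have inj: "inj_on e {..<?N}" unfolding inj_on_def e_def by auto
  have img: "e ` {..<?N} \<subseteq> {..<?N'}" unfolding e_def using A by auto
  have outside: "?c' j = 0" if "j < ?N'" "j \<notin> e ` {..<?N}" for j
  proof -
    have "j < nD \<Longrightarrow> j \<in> e ` {..<?N}" using A by (force simp: e_def)
    moreover have "nD + length E \<le> j \<Longrightarrow> e (j - length E) = j \<and> j - length E < ?N"
      using A that(1) by (auto simp: e_def)
    ultimately show ?thesis using that by force
  qed
  have reindex: "(\<Sum>j<?N'. f j) = (\<Sum>i<?N. f (e i))" if "\<And>j. ?c' j = 0 \<Longrightarrow> f j = 0"
    for f :: "nat \<Rightarrow> real"
    using outside that by (intro sum_reindex_vanishing[OF inj img]) auto
  have ce: "?c' (e i) = c i" and pe: "?ps' ! (e i) = ?ps ! i" and ne: "e i < nD \<longleftrightarrow> i < nD"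
    if "i < ?N" for i
    using A that by (auto simp: e_def nth_append)
  have "(\<Sum>j<?N'. ?c' j * k z (?ps' ! j)) = (\<Sum>i<?N. c i * k z (?ps ! i))"
    by (subst reindex) (auto simp: ce pe)
  moreover have "(\<Sum>i<?N'. \<Sum>j<?N'. ?c' i * ?c' j * k (?ps' ! i) (?ps' ! j))
      = (\<Sum>i<?N. \<Sum>j<?N. c i * c j * k (?ps ! i) (?ps ! j))"
    by (subst reindex, simp, subst reindex) (auto simp: ce pe)
  moreover have "(\<Sum>i<?N'. if i < nD then (?c' i)\<^sup>2 else 0) = (\<Sum>i<?N. if i < nD then (c i)\<^sup>2 else 0)"
    by (subst reindex) (auto simp: ne e_def intro!: sum.cong)
  ultimately show ?thesis unfolding linear_predictor_mse_def by simp
qed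

lemma post_var_insert_le:
  assumes kern: "psd_kernel d k" and ps: "set (A @ E @ M) \<subseteq> carrier_vec d"
    and z: "z \<in> carrier_vec d" and A: "length A = nD"
  shows "post_var k \<sigma> nD z (A @ E @ M) \<le> post_var k \<sigma> nD z (A @ M)"
proof -
  have ps_sub: "set (A @ M) \<subseteq> carrier_vec d" using ps by auto
  obtain c where c: "post_var k \<sigma> nD z (A @ M) = linear_predictor_mse k \<sigma> nD z (A @ M) c"
    using post_var_linear_predictor_mse(2)[OF kern ps_sub z] by blast
  show ?thesis
    unfolding c linear_predictor_mse_insert[OF A, of k \<sigma> z E M c, symmetric]
    by (rule post_var_linear_predictor_mse(1)[OF kern ps z])
qed

lemma Xm_append_older_memory:
  assumes "mb \<le> mb'"
  shows "Xm X mb' \<xi> t = cols X @ map \<xi> [t - min t mb'..<t - min t mb] @ mem_pts mb \<xi> t"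
proof -
  have "[t - min t mb'..<t] = [t - min t mb'..<t - min t mb] @ [t - min t mb..<t]"
    using upt_add_eq_append[of "t - min t mb'" "t - min t mb" "min t mb"] assms by simp
  then show ?thesis unfolding Xm_def mem_pts_def by simp
qed

lemma GP_var_antimono_memory:
  assumes kern: "psd_kernel d k" and X: "X \<in> carrier_mat d nD"
    and \<xi>: "\<And>s. \<xi> s \<in> carrier_vec d" and mem: "mb \<le> mb'"
  shows "GP_var k \<sigma>n X mb' \<xi> t \<le> GP_var k \<sigma>n X mb \<xi> t"
proof -
  have "set (Xm X mb' \<xi> t) \<subseteq> carrier_vec d"
    using X \<xi> cols_dim[of X] unfolding Xm_def mem_pts_def by auto
  then show ?thesis
    unfolding GP_var_eq_post_var Xm_append_older_memory[OF mem]
    using post_var_insert_le[OF kern _ \<xi>] X by (simp add: Xm_def)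
qed

lemma mat_trace_GP_F: "mat_trace (GP_F k \<sigma>n X nx mb \<xi> t) = real nx * GP_var k \<sigma>n X mb \<xi> t"
  unfolding mat_trace_def GP_F_def by simp

theorem corollary2:
  fixes k :: "real vec \<Rightarrow> real vec \<Rightarrow> real"
    and m :: "real vec \<Rightarrow> real"
    and \<sigma>n :: real
    and X Y :: "real mat"
    and nx nu nD mbar mbar' t :: nat
    and x u \<xi> :: "nat \<Rightarrow> real vec"
  assumes X: "X \<in> carrier_mat (nx + nu) nD"
    and Y: "Y \<in> carrier_mat nD nx"
    and kern: "psd_kernel (nx + nu) k"
    and mcont: "cont_mean (nx + nu) m"
    and xdim: "\<And>s. x s \<in> carrier_vec nx"
    and udim: "\<And>s. u s \<in> carrier_vec nu"
    and xi: "\<And>s. \<xi> s = x s @\<^sub>v u s"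
    and mem: "mbar' > mbar"
  shows "mat_trace (GP_F k \<sigma>n X nx mbar' \<xi> t) \<le> mat_trace (GP_F k \<sigma>n X nx mbar \<xi> t)"
proof -
  have "\<xi> s \<in> carrier_vec (nx + nu)" for s using xi xdim udim by simp
  then have "GP_var k \<sigma>n X mbar' \<xi> t \<le> GP_var k \<sigma>n X mbar \<xi> t"
    using GP_var_antimono_memory[OF kern X] mem by simp
  then show ?thesis unfolding mat_trace_GP_F by (simp add: mult_left_mono)
qed

end
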